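(* Let $n\ge1$ and \[P^n=\Big\{x\in[0,4]^n:\sum_{i\in S}x_i+\sum_{i\notin S}(4-x_i)\ge\tfrac12\ \ \forall S\subseteq\{1,\dots,n\}\Big\},\] with all variables integer. Then every complete branch-and-bound tree for $P^n\cap\mathbb{Z}^n$ (with root label $[0,4]^n$) has at least $2\cdot2^n-1$ leaf nodes.
   Context: A branch-and-bound tree for $P^n\cap\mathbb{Z}^n$ is a rooted binary tree whose nodes are labeled by polyhedra: the root is labeled $[0,4]^n$, and each non-leaf node labeled $D'$ has exactly two children labeled $D'\cap\{x:x_i\le t\}$ and $D'\cap\{x:x_i\ge t+1\}$ for some $i\in\{1,\dots,n\}$ and $t\in\mathbb{Z}$. The tree is complete if $\mathrm{conv}(P^n\cap\mathbb{Z}^n)=\mathrm{conv}\big(\bigcup_{N\text{ leaf}}(N\cap P^n)\big)$. The size of a tree is its number of leaf nodes. *)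

theory Defs
  imports "HOL-Analysis.Analysis"
begin

text \<open>Points of R^n are vectors of type real^'n, with n = CARD('n).
  A branch-and-bound tree records, at each inner node, the branching variable i
  and the integer threshold t; the labels of the nodes are computed from the root label.\<close>

datatype 'n bbtree = Leaf | Branch 'n int "'n bbtree" "'n bbtree"

fun bb_size :: "'n bbtree \<Rightarrow> nat" where
  "bb_size Leaf = 1"
| "bb_size (Branch i t l r) = bb_size l + bb_size r"

fun bb_leaf_labels :: "(real^'n) set \<Rightarrow> 'n bbtree \<Rightarrow> (real^'n) set set" where
  "bb_leaf_labels D Leaf = {D}"
| "bb_leaf_labels D (Branch i t l r) =
     bb_leaf_labels (D \<inter> {x. x $ i \<le> of_int t}) l \<union>
     bb_leaf_labels (D \<inter> {x. x $ i \<ge> of_int t + 1}) r"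

definition box04 :: "(real^'n) set" where
  "box04 = {x. \<forall>i. 0 \<le> x $ i \<and> x $ i \<le> 4}"

definition integer_points :: "(real^'n) set" where
  "integer_points = {x. \<forall>i. x $ i \<in> \<int>}"

definition Pn :: "(real^'n) set" where
  "Pn = {x \<in> box04. \<forall>S::'n set.
          (\<Sum>i\<in>S. x $ i) + (\<Sum>i\<in>- S. 4 - x $ i) \<ge> 1/2}"

definition bb_complete :: "(real^'n) set \<Rightarrow> 'n bbtree \<Rightarrow> bool" where
  "bb_complete P T \<longleftrightarrow>
     convex hull (P \<inter> integer_points) =
     convex hull (\<Union>N\<in>bb_leaf_labels box04 T. N \<inter> P)"

end

theory Submission
  imports Defs
begin

text \<open>For a box with integer bounds inside [0,4]^n let V be the number of vertices of {0,4}^n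
  it contains, and let s \<in> {0,1} record whether some coordinate interval of the box contains
  exactly one of 0 and 4 and also meets [1,3]. Below a box, every branch-and-bound tree whose
  leaves satisfy N \<inter> P \<subseteq> conv (P \<inter> Z^n) has at least 2V - 1 + s leaves.
  For a leaf: if it contains a vertex v but is not the single point v, moving one coordinate of v
  by 1/2 towards the centre gives a point of P that violates the cut inequality of v, which holds
  with right-hand side 1 on the integer hull; hence 2V - 1 + s \<le> 1.
  For a branching on x_i \<le> t: V is additive, and if both children contain vertices then
  coordinate i is split into a part containing 0 and a part containing 4, one of which meets [1,3],
  so the children together gain at least the 1 that 2V - 1 loses.
  The root has V = 2^n and s = 0.\<close>

definition int_box :: "('n \<Rightarrow> int) \<Rightarrow> ('n \<Rightarrow> int) \<Rightarrow> (real^'n) set" where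
  "int_box lo hi = {x. \<forall>j. of_int (lo j) \<le> x $ j \<and> x $ j \<le> of_int (hi j)}"

lemma int_box_inter_le:
  "int_box lo hi \<inter> {x. x $ i \<le> of_int t} = int_box lo (hi(i := min (hi i) t))"
  by (auto simp: int_box_def of_int_min)

lemma int_box_inter_ge:
  "int_box lo hi \<inter> {x. of_int t + 1 \<le> x $ i} = int_box (lo(i := max (lo i) (t + 1))) hi"
  by (auto simp: int_box_def of_int_max)

lemma box04_eq_int_box: "box04 = int_box (\<lambda>_. 0) (\<lambda>_. 4)"
  by (simp add: box04_def int_box_def)

definition cut_sum :: "'n set \<Rightarrow> real^'n \<Rightarrow> real" where
  "cut_sum S x = (\<Sum>i\<in>S. x $ i) + (\<Sum>i\<in>- S. 4 - x $ i)"

lemma cut_sum_eq_sum_if: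
  fixes x :: "real^'n::finite"
  shows "cut_sum S x = (\<Sum>i\<in>UNIV. if i \<in> S then x $ i else 4 - x $ i)"
  by (simp add: cut_sum_def sum.If_cases Compl_eq_Diff_UNIV)

lemma mem_Pn: "x \<in> Pn \<longleftrightarrow> x \<in> box04 \<and> (\<forall>S. 1/2 \<le> cut_sum S x)"
  by (simp add: Pn_def cut_sum_def)

lemma cut_sum_convex_comb:
  fixes x y :: "real^'n::finite"
  assumes "u + v = 1"
  shows "cut_sum S (u *\<^sub>R x + v *\<^sub>R y) = u * cut_sum S x + v * cut_sum S y"
  unfolding cut_sum_eq_sum_if sum_distrib_left sum.distrib[symmetric]
  by (rule sum.cong) (use assms in \<open>auto simp: algebra_simps\<close>)

lemma convex_cut_sum_ge: "convex {x::real^'n::finite. c \<le> cut_sum S x}"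
proof (rule convexI)
  fix x y :: "real^'n" and u v :: real
  assume "x \<in> {x. c \<le> cut_sum S x}" "y \<in> {x. c \<le> cut_sum S x}" "0 \<le> u" "0 \<le> v" "u + v = 1"
  then have "u * c + v * c \<le> u * cut_sum S x + v * cut_sum S y"
    by (simp add: add_mono mult_left_mono)
  with \<open>u + v = 1\<close> show "u *\<^sub>R x + v *\<^sub>R y \<in> {x. c \<le> cut_sum S x}"
    by (simp add: cut_sum_convex_comb flip: distrib_right)
qed

lemma cut_sum_ge_1_on_integer_hull:
  assumes "x \<in> convex hull (Pn \<inter> integer_points)"
  shows "1 \<le> cut_sum S x"
proof -
  have "Pn \<inter> integer_points \<subseteq> {x. 1 \<le> cut_sum S x}" (is "_ \<subseteq> ?H")
  proof
    fix z :: "real^'a" assume z: "z \<in> Pn \<inter> integer_points"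
    then have "cut_sum S z \<in> \<int>"
      unfolding cut_sum_def integer_points_def by (intro Ints_add Ints_sum Ints_diff) auto
    moreover have "1/2 \<le> cut_sum S z" using z by (simp add: mem_Pn)
    ultimately show "z \<in> {x. 1 \<le> cut_sum S x}"
      by (auto elim!: Ints_cases)
  qed
  then have "convex hull (Pn \<inter> integer_points) \<subseteq> ?H"
    by (rule hull_minimal) (rule convex_cut_sum_ge)
  then show ?thesis using assms by blast
qed

definition corner_shift :: "real^'n \<Rightarrow> 'n \<Rightarrow> real^'n" where
  "corner_shift v j = (\<chi> k. if k = j then (if v $ j = 0 then 1/2 else 7/2) else v $ k)"

lemma corner_shift_in_Pn:
  fixes v :: "real^'n::finite"
  assumes corner: "\<forall>k. v $ k = 0 \<or> v $ k = 4"
  shows "corner_shift v j \<in> Pn"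
proof -
  let ?p = "corner_shift v j"
  have p04: "0 \<le> ?p $ k \<and> ?p $ k \<le> 4" for k
    using corner[rule_format, of k] by (auto simp: corner_shift_def)
  have "1/2 \<le> cut_sum S ?p" for S
  proof -
    let ?h = "\<lambda>k. if k \<in> S then ?p $ k else 4 - ?p $ k"
    have "1/2 \<le> ?h j"
      using corner by (auto simp: corner_shift_def)
    also have "\<dots> \<le> sum ?h UNIV"
      by (rule member_le_sum) (use p04 in auto)
    finally show ?thesis by (simp add: cut_sum_eq_sum_if)
  qed
  then show ?thesis
    using p04 by (simp add: mem_Pn box04_def)
qed

lemma cut_sum_corner_shift:
  fixes v :: "real^'n::finite"
  assumes corner: "\<forall>k. v $ k = 0 \<or> v $ k = 4"
  shows "cut_sum {k. v $ k = 0} (corner_shift v j) = 1/2"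
proof -
  have "cut_sum {k. v $ k = 0} (corner_shift v j) = (\<Sum>k\<in>UNIV. if k = j then 1/2 else 0)"
    unfolding cut_sum_eq_sum_if
    by (rule sum.cong) (use corner in \<open>auto simp: corner_shift_def\<close>)
  then show ?thesis by simp
qed

lemma corner_shift_notin_integer_hull:
  fixes v :: "real^'n::finite"
  assumes "\<forall>k. v $ k = 0 \<or> v $ k = 4"
  shows "corner_shift v j \<notin> convex hull (Pn \<inter> integer_points)"
  using cut_sum_ge_1_on_integer_hull[of "corner_shift v j" "{k. v $ k = 0}"]
    cut_sum_corner_shift[OF assms] by auto

lemma valid_int_box_through_corner_is_point:
  fixes v :: "real^'n::finite"
  assumes valid: "int_box lo hi \<inter> Pn \<subseteq> convex hull (Pn \<inter> integer_points)"
    and bounds: "\<forall>k. 0 \<le> lo k \<and> hi k \<le> 4"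
    and corner: "\<forall>k. v $ k = 0 \<or> v $ k = 4"
    and v: "v \<in> int_box lo hi"
  shows "lo j = hi j"
proof (rule ccontr)
  assume "lo j \<noteq> hi j"
  moreover have "real_of_int (lo j) \<le> of_int (hi j)"
    using v unfolding int_box_def by (blast intro: order_trans)
  ultimately have wide: "lo j + 1 \<le> hi j"
    by simp
  have "of_int (lo k) \<le> corner_shift v j $ k \<and> corner_shift v j $ k \<le> of_int (hi k)" for k
  proof (cases "k = j")
    case True
    have "real_of_int (lo j) \<le> v $ j" "v $ j \<le> of_int (hi j)"
      using v by (auto simp: int_box_def)
    moreover have "real_of_int (lo j) \<ge> 0" "real_of_int (hi j) \<le> 4" "real_of_int (lo j) + 1 \<le> of_int (hi j)"
      using bounds wide by auto
    ultimately show ?thesis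
      using True corner[rule_format, of j] by (auto simp: corner_shift_def)
  qed (use v in \<open>simp add: int_box_def corner_shift_def\<close>)
  then have "corner_shift v j \<in> int_box lo hi"
    by (simp add: int_box_def)
  with valid corner_shift_in_Pn[OF corner] corner_shift_notin_integer_hull[OF corner]
  show False by blast
qed

definition corners_in :: "int \<Rightarrow> int \<Rightarrow> int" where
  "corners_in l h = of_bool (l \<le> 0 \<and> 0 \<le> h) + of_bool (l \<le> 4 \<and> 4 \<le> h)"

definition meets_middle :: "int \<Rightarrow> int \<Rightarrow> bool" where
  "meets_middle l h \<longleftrightarrow> max l 1 \<le> min h 3"

definition box_corners :: "('n::finite \<Rightarrow> int) \<Rightarrow> ('n \<Rightarrow> int) \<Rightarrow> int" where
  "box_corners lo hi = (\<Prod>j\<in>UNIV. corners_in (lo j) (hi j))"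

definition box_slack :: "('n \<Rightarrow> int) \<Rightarrow> ('n \<Rightarrow> int) \<Rightarrow> int" where
  "box_slack lo hi = of_bool (\<exists>j. corners_in (lo j) (hi j) = 1 \<and> meets_middle (lo j) (hi j))"

definition box_potential :: "('n::finite \<Rightarrow> int) \<Rightarrow> ('n \<Rightarrow> int) \<Rightarrow> int" where
  "box_potential lo hi = 2 * box_corners lo hi - 1 + box_slack lo hi"

lemma corners_in_split: "corners_in l h = corners_in l (min h t) + corners_in (max l (t + 1)) h"
  by (simp add: corners_in_def of_bool_def min_def max_def)

lemma corners_in_split_both:
  assumes "corners_in l (min h t) \<noteq> 0" "corners_in (max l (t + 1)) h \<noteq> 0"
  shows "corners_in l (min h t) = 1 \<and> corners_in (max l (t + 1)) h = 1 \<and>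
    (meets_middle l (min h t) \<or> meets_middle (max l (t + 1)) h)"
  using assms by (simp add: corners_in_def meets_middle_def of_bool_def min_def max_def split: if_splits)

lemma box_corners_remove:
  "box_corners lo hi = corners_in (lo i) (hi i) * (\<Prod>j\<in>UNIV - {i}. corners_in (lo j) (hi j))"
  unfolding box_corners_def by (rule prod.remove) auto

lemma box_corners_branch:
  fixes lo hi :: "'n::finite \<Rightarrow> int"
  shows "box_corners lo hi =
    box_corners lo (hi(i := min (hi i) t)) + box_corners (lo(i := max (lo i) (t + 1))) hi"
proof -
  let ?P = "\<lambda>lo hi. \<Prod>j\<in>UNIV - {i}. corners_in (lo j) (hi j)"
  have "?P lo (hi(i := min (hi i) t)) = ?P lo hi" "?P (lo(i := max (lo i) (t + 1))) hi = ?P lo hi"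
    by (auto intro: prod.cong)
  then show ?thesis
    unfolding box_corners_remove[where i = i]
    by (simp add: corners_in_split[of "lo i" "hi i" t] distrib_right)
qed

lemma box_slack_branch:
  fixes lo hi :: "'n \<Rightarrow> int" and i :: 'n and t :: int
  defines "hi' \<equiv> hi(i := min (hi i) t)" and "lo' \<equiv> lo(i := max (lo i) (t + 1))"
  assumes "corners_in (lo i) (hi' i) \<noteq> 0" "corners_in (lo' i) (hi i) \<noteq> 0"
  shows "box_slack lo hi + 1 \<le> box_slack lo hi' + box_slack lo' hi"
proof -
  have i: "corners_in (lo i) (hi' i) = 1" "corners_in (lo' i) (hi i) = 1"
    "meets_middle (lo i) (hi' i) \<or> meets_middle (lo' i) (hi i)"
    using corners_in_split_both[of "lo i" "hi i" t] assms by (simp_all add: hi'_def lo'_def)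
  then have one_side: "1 \<le> box_slack lo hi' + box_slack lo' hi"
    by (auto simp: box_slack_def)
  have both_sides: "box_slack lo hi' = 1 \<and> box_slack lo' hi = 1" if parent: "box_slack lo hi = 1"
  proof -
    obtain j where j: "corners_in (lo j) (hi j) = 1" "meets_middle (lo j) (hi j)"
      using parent by (auto simp: box_slack_def)
    have "j \<noteq> i"
      using j(1) i corners_in_split[of "lo i" "hi i" t] by (auto simp: hi'_def lo'_def)
    then show ?thesis
      using j by (auto simp: box_slack_def hi'_def lo'_def)
  qed
  show ?thesis
  proof (cases "box_slack lo hi = 1")
    case True
    with both_sides show ?thesis by simp
  next
    case False
    then have "box_slack lo hi = 0" by (simp add: box_slack_def)
    with one_side show ?thesis by simp
  qed
qed

lemma box_potential_branch:
  fixes lo hi :: "'n::finite \<Rightarrow> int" and i :: 'n and t L R :: int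
  defines "hi' \<equiv> hi(i := min (hi i) t)" and "lo' \<equiv> lo(i := max (lo i) (t + 1))"
  assumes "box_potential lo hi' \<le> L" "box_potential lo' hi \<le> R" "1 \<le> L" "1 \<le> R"
  shows "box_potential lo hi \<le> L + R"
proof -
  have corners: "box_corners lo hi = box_corners lo hi' + box_corners lo' hi"
    unfolding hi'_def lo'_def by (rule box_corners_branch)
  have slack: "0 \<le> box_slack lo hi" "box_slack lo hi \<le> 1" for lo hi :: "'n \<Rightarrow> int"
    by (simp_all add: box_slack_def)
  show ?thesis
  proof (cases "box_corners lo hi' = 0 \<or> box_corners lo' hi = 0")
    case True
    then show ?thesis
      using assms(3-) corners slack[of lo hi] slack[of lo hi'] slack[of lo' hi]
      by (auto simp: box_potential_def)
  next
    case False
    then have "corners_in (lo i) (hi' i) \<noteq> 0" "corners_in (lo' i) (hi i) \<noteq> 0"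
      using box_corners_remove[of lo hi' i] box_corners_remove[of lo' hi i] by auto
    then have "box_slack lo hi + 1 \<le> box_slack lo hi' + box_slack lo' hi"
      unfolding hi'_def lo'_def by (rule box_slack_branch)
    then show ?thesis
      using assms(3,4) corners by (simp add: box_potential_def)
  qed
qed

lemma valid_int_box_potential_le_1:
  fixes lo hi :: "'n::finite \<Rightarrow> int"
  assumes valid: "int_box lo hi \<inter> Pn \<subseteq> convex hull (Pn \<inter> integer_points)"
    and bounds: "\<forall>k. 0 \<le> lo k \<and> hi k \<le> 4"
  shows "box_potential lo hi \<le> 1"
proof (cases "box_corners lo hi = 0")
  case True
  then show ?thesis by (simp add: box_potential_def box_slack_def)
next
  case False
  then have nonzero: "corners_in (lo k) (hi k) \<noteq> 0" for k
    by (auto simp: box_corners_def)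
  define v :: "real^'n" where "v = (\<chi> k. if lo k \<le> 0 \<and> 0 \<le> hi k then 0 else 4)"
  have hit: "lo k \<le> 0 \<and> 0 \<le> hi k \<or> lo k \<le> 4 \<and> 4 \<le> hi k" for k
    using nonzero[of k] by (auto simp: corners_in_def)
  then have "of_int (lo k) \<le> v $ k \<and> v $ k \<le> of_int (hi k)" for k
    by (auto simp: v_def)
  then have "v \<in> int_box lo hi"
    by (simp add: int_box_def)
  moreover have "\<forall>k. v $ k = 0 \<or> v $ k = 4"
    by (simp add: v_def)
  ultimately have point: "lo k = hi k" for k
    using valid_int_box_through_corner_is_point[OF valid bounds] by blast
  then have "corners_in (lo k) (hi k) = 1" "\<not> meets_middle (lo k) (hi k)" for k
    using hit[of k] point[of k] by (auto simp: corners_in_def meets_middle_def)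
  then show ?thesis
    by (simp add: box_potential_def box_corners_def box_slack_def)
qed

lemma bb_size_ge_1: "1 \<le> bb_size T"
  by (induction T) auto

lemma box_potential_le_bb_size:
  fixes T :: "'n::finite bbtree"
  assumes "\<forall>k. 0 \<le> lo k \<and> hi k \<le> 4"
    and "\<forall>N \<in> bb_leaf_labels (int_box lo hi) T. N \<inter> Pn \<subseteq> convex hull (Pn \<inter> integer_points)"
  shows "box_potential lo hi \<le> int (bb_size T)"
  using assms
proof (induction T arbitrary: lo hi)
  case Leaf
  then show ?case
    using valid_int_box_potential_le_1 by simp
next
  case (Branch i t l r)
  let ?hi' = "hi(i := min (hi i) t)" and ?lo' = "lo(i := max (lo i) (t + 1))"
  have labels: "bb_leaf_labels (int_box lo hi) (Branch i t l r) =
      bb_leaf_labels (int_box lo ?hi') l \<union> bb_leaf_labels (int_box ?lo' hi) r"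
    by (simp only: bb_leaf_labels.simps int_box_inter_le int_box_inter_ge)
  have "\<forall>k. 0 \<le> lo k \<and> ?hi' k \<le> 4" "\<forall>k. 0 \<le> ?lo' k \<and> hi k \<le> 4"
    using Branch.prems(1) by (auto simp: min_le_iff_disj le_max_iff_disj)
  moreover have
    "\<forall>N \<in> bb_leaf_labels (int_box lo ?hi') l. N \<inter> Pn \<subseteq> convex hull (Pn \<inter> integer_points)"
    "\<forall>N \<in> bb_leaf_labels (int_box ?lo' hi) r. N \<inter> Pn \<subseteq> convex hull (Pn \<inter> integer_points)"
    using Branch.prems(2) unfolding labels by blast+
  ultimately have "box_potential lo ?hi' \<le> int (bb_size l)" "box_potential ?lo' hi \<le> int (bb_size r)"
    using Branch.IH by blast+
  then have "box_potential lo hi \<le> int (bb_size l) + int (bb_size r)"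
    by (rule box_potential_branch) (use bb_size_ge_1[of l] bb_size_ge_1[of r] in simp_all)
  then show ?case by simp
qed

theorem proposition7:
  fixes T :: "'n::finite bbtree"
  assumes "bb_complete (Pn :: (real^'n) set) T"
  shows "bb_size T \<ge> 2 * 2 ^ CARD('n) - 1"
proof -
  have "\<forall>N \<in> bb_leaf_labels (int_box (\<lambda>_. 0) (\<lambda>_. 4)) T.
      N \<inter> Pn \<subseteq> convex hull (Pn \<inter> integer_points)"
    using assms hull_subset[of "\<Union>N\<in>bb_leaf_labels box04 T. N \<inter> Pn" convex]
    unfolding bb_complete_def box04_eq_int_box by blast
  then have "box_potential (\<lambda>_::'n. 0) (\<lambda>_. 4) \<le> int (bb_size T)"
    by (intro box_potential_le_bb_size) simp_all
  moreover have "box_potential (\<lambda>_::'n. 0) (\<lambda>_. 4) = 2 * 2 ^ CARD('n) - 1"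
    by (simp add: box_potential_def box_corners_def box_slack_def corners_in_def)
  ultimately have "int (2 * 2 ^ CARD('n) - 1) \<le> int (bb_size T)"
    by (simp add: of_nat_diff)
  then show ?thesis by (simp only: of_nat_le_iff)
qed

end
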